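(* There exists an absolute constant $c>0$ such that the following holds. Let $r$ be a positive integer and let $M\in\{0,1\}^{n\times n}$ with $\operatorname{rank}(M)\leq r$ and $d=|M|/n\leq n/2$. Then $$\operatorname{pdisc}(M)\geq c\cdot\min\left\{dn,\frac{d^{1/2}n^{3/2}}{\sqrt r}\right\}.$$
   Context: $|M|$ is the number of $1$ entries of $M$; let $N=2n$ and $p=|M|/n^2$. The symmetrization of $M$ is the symmetric matrix $A\in\mathbb{R}^{N\times N}$ with $A_{i,j+n}=A_{j+n,i}=M_{i,j}$ and all other entries $0$. $L\in\mathbb{R}^{N\times N}$ is the adjacency matrix of the complete bipartite graph with parts $[n]$ and $[n+1,N]$. For $X\in\mathbb{R}^{N\times N}$, $\operatorname{disc}(X)=\langle X,A\rangle-p\langle X,L\rangle$ (entrywise inner product), and $\operatorname{pdisc}(M)=\max\{\operatorname{disc}(X): X\text{ symmetric positive semidefinite},\ X_{i,i}\leq1\ \forall i\}$. *)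

theory Defs
  imports Complex_Main "Jordan_Normal_Form.DL_Rank"
begin

definition ones :: "real mat \<Rightarrow> nat" where
  "ones M = card {(i,j). i < dim_row M \<and> j < dim_col M \<and> M $$ (i,j) = 1}"

definition symmetrization :: "real mat \<Rightarrow> real mat" where
  "symmetrization M = (let n = dim_row M in
     mat (2*n) (2*n) (\<lambda>(i,j). if i < n \<and> n \<le> j then M $$ (i, j - n)
                          else if n \<le> i \<and> j < n then M $$ (j, i - n) else 0))"

definition bip_mat :: "nat \<Rightarrow> real mat" where
  "bip_mat n = mat (2*n) (2*n) (\<lambda>(i,j). if (i < n) \<noteq> (j < n) then 1 else 0)"

definition entry_inner :: "real mat \<Rightarrow> real mat \<Rightarrow> real" where
  "entry_inner X Y = (\<Sum>i<dim_row X. \<Sum>j<dim_col X. X $$ (i,j) * Y $$ (i,j))"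

definition psd :: "nat \<Rightarrow> real mat \<Rightarrow> bool" where
  "psd N X \<longleftrightarrow> X \<in> carrier_mat N N \<and> transpose_mat X = X \<and>
     (\<forall>v \<in> carrier_vec N. v \<bullet> (X *\<^sub>v v) \<ge> 0)"

definition disc :: "real mat \<Rightarrow> real mat \<Rightarrow> real" where
  "disc M X = (let n = dim_row M; p = real (ones M) / (real n)^2 in
     entry_inner X (symmetrization M) - p * entry_inner X (bip_mat n))"

text \<open>pdisc(M) = max of disc(X) over symmetric PSD X with diagonal entries at most 1
  (the maximum is attained, so it equals the supremum).\<close>
definition pdisc :: "real mat \<Rightarrow> real" where
  "pdisc M = Sup (disc M ` {X. psd (2 * dim_row M) X \<and>
                              (\<forall>i < 2 * dim_row M. X $$ (i,i) \<le> 1)})"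

end

theory Submission
  imports Defs "Jordan_Normal_Form.Gram_Schmidt"
begin

(* For vectors a_1, ..., a_n, b_1, ..., b_n of norm at most 1 their Gram matrix is feasible,
   so pdisc(M) >= 2 * sum_{i,j} (M_ij - p) <a_i, b_j>.  Let d = |M|/n.  Taking indicator vectors,
   the rows (columns) with sum at least 2d contribute their number of ones to pdisc(M); if
   they carry a quarter of the ones we are done.  Otherwise half of the ones lie in rows and
   columns with sums below 2d.  Factor M = F G^T where F has rank(M) <= r orthonormal columns:
   the squared row norms l_i of F sum to at most r and the squared row norms of G are the
   column sums c_j.  Normalising the rows of F and G to unit length makes <a_i, b_j> equal to
   1/sqrt(l_i c_j) on the ones, and Hoelder's inequality
   sum_e 1/sqrt(x_e) >= |E|^(3/2) / sqrt(sum_e x_e) together with sum l_i c_j <= (2d)^2 r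
   gives pdisc(M) >= |E|^(3/2) / (2d sqrt r) for the set E of light ones. *)

lemma sum_lessThan_add: "(\<Sum>s<m + k. f s) = (\<Sum>s<m. f s) + (\<Sum>s<k. f (m + s))" for m k :: nat
  by (induction k) (simp_all add: add_ac)

lemma sum_of_bool_rectangle:
  fixes F :: "'a \<Rightarrow> 'b \<Rightarrow> 'c::comm_semiring_1"
  assumes "finite A" "finite B" "I \<subseteq> A" "J \<subseteq> B"
  shows "(\<Sum>i\<in>A. \<Sum>j\<in>B. of_bool (i \<in> I) * of_bool (j \<in> J) * F i j) = (\<Sum>i\<in>I. \<Sum>j\<in>J. F i j)"
proof -
  have "(\<Sum>i\<in>A. \<Sum>j\<in>B. of_bool (i \<in> I) * of_bool (j \<in> J) * F i j)
      = (\<Sum>i\<in>A. of_bool (i \<in> I) * (\<Sum>j\<in>B. of_bool (j \<in> J) * F i j))"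
    by (simp add: sum_distrib_left mult.assoc del: sum_of_bool_mult_eq sum_mult_of_bool_eq)
  also have "\<dots> = (\<Sum>i\<in>I. \<Sum>j\<in>J. F i j)"
    using assms by (simp add: Int_absorb1 Int_absorb2)
  finally show ?thesis .
qed

lemma sum_squares_eq_coeff_squares:
  fixes c :: "nat \<Rightarrow> real" and h :: "'k \<Rightarrow> real"
  assumes c: "\<forall>i<n. c i = (\<Sum>k\<in>K. f i k * h k)" and h: "\<forall>k\<in>K. h k = (\<Sum>i<n. f i k * c i)"
  shows "(\<Sum>i<n. (c i)\<^sup>2) = (\<Sum>k\<in>K. (h k)\<^sup>2)"
proof -
  have "(\<Sum>i<n. (c i)\<^sup>2) = (\<Sum>i<n. c i * (\<Sum>k\<in>K. f i k * h k))"
    using c by (simp add: power2_eq_square)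
  also have "\<dots> = (\<Sum>k\<in>K. h k * (\<Sum>i<n. f i k * c i))"
    by (simp add: sum_distrib_left mult_ac sum.swap[where A = "{..<n}"])
  also have "\<dots> = (\<Sum>k\<in>K. (h k)\<^sup>2)"
    using h by (simp add: power2_eq_square)
  finally show ?thesis .
qed

lemma sum_squares_pos_if_sum_mult_nonzero:
  fixes f g :: "'k \<Rightarrow> real"
  assumes "finite K" and "(\<Sum>k\<in>K. f k * g k) \<noteq> 0"
  shows "0 < (\<Sum>k\<in>K. (f k)\<^sup>2)"
proof (rule ccontr)
  assume "\<not> 0 < (\<Sum>k\<in>K. (f k)\<^sup>2)"
  then have "(\<Sum>k\<in>K. (f k)\<^sup>2) = 0" by (simp add: order.antisym sum_nonneg)
  then have "\<forall>k\<in>K. f k = 0" using assms(1) by (simp add: sum_nonneg_eq_0_iff)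
  then show False using assms(2) by simp
qed

section \<open>Gram matrices and the semidefinite relaxation\<close>

lemma quadratic_form_eq_sum:
  assumes "X \<in> carrier_mat N N" and "v \<in> carrier_vec N"
  shows "v \<bullet> (X *\<^sub>v v) = (\<Sum>s<N. \<Sum>t<N. v $ s * X $$ (s,t) * v $ t)"
  using assms by (simp add: scalar_prod_def mult_mat_vec_def row_def lessThan_atLeast0 sum_distrib_left mult_ac)

lemma psd_abs_entry_le_1:
  assumes X: "psd N X" and diag: "\<forall>i<N. X $$ (i,i) \<le> 1" and s: "s < N" and t: "t < N"
  shows "\<bar>X $$ (s,t)\<bar> \<le> 1"
proof -
  have XC: "X \<in> carrier_mat N N" and sym: "X $$ (t,s) = X $$ (s,t)"
    using X s t unfolding psd_def by (metis carrier_matD index_transpose_mat(1))+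
  have "0 \<le> X $$ (s,s) + 2 * \<sigma> * X $$ (s,t) + \<sigma>\<^sup>2 * X $$ (t,t)" for \<sigma> :: real
  proof -
    define v where "v = unit_vec N s + \<sigma> \<cdot>\<^sub>v unit_vec N t"
    have "v \<in> carrier_vec N" unfolding v_def by simp
    then have "0 \<le> v \<bullet> (X *\<^sub>v v)" using X unfolding psd_def by blast
    also have "\<dots> = X $$ (s,s) + 2 * \<sigma> * X $$ (s,t) + \<sigma>\<^sup>2 * X $$ (t,t)"
      using XC s t sym unfolding v_def
      by (simp add: algebra_simps mult_mat_vec add_scalar_prod_distrib[of _ N]
          scalar_prod_add_distrib[of _ N] power2_eq_square)
    finally show ?thesis .
  qed
  from this[of 1] this[of "-1"] have "0 \<le> X $$ (s,s) + 2 * X $$ (s,t) + X $$ (t,t)"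
    and "0 \<le> X $$ (s,s) - 2 * X $$ (s,t) + X $$ (t,t)" by simp_all
  moreover have "X $$ (s,s) \<le> 1" and "X $$ (t,t) \<le> 1" using diag s t by auto
  ultimately show ?thesis by (intro abs_leI) linarith+
qed

lemma gram_mat_psd:
  assumes "finite K"
  shows "psd N (mat N N (\<lambda>(s,t). \<Sum>k\<in>K. w s k * w t k))" (is "psd N ?X")
proof -
  have "v \<bullet> (?X *\<^sub>v v) = (\<Sum>k\<in>K. (\<Sum>s<N. v $ s * w s k)\<^sup>2)" if v: "v \<in> carrier_vec N" for v
  proof -
    have "v \<bullet> (?X *\<^sub>v v) = (\<Sum>s<N. \<Sum>t<N. v $ s * ?X $$ (s,t) * v $ t)"
      by (rule quadratic_form_eq_sum[OF _ v]) simp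
    also have "\<dots> = (\<Sum>s<N. \<Sum>t<N. \<Sum>k\<in>K. v $ s * w s k * (v $ t * w t k))"
      by (simp add: sum_distrib_left sum_distrib_right mult_ac)
    also have "\<dots> = (\<Sum>k\<in>K. \<Sum>s<N. \<Sum>t<N. v $ s * w s k * (v $ t * w t k))"
      by (subst sum.swap, subst (2) sum.swap) (rule refl)
    also have "\<dots> = (\<Sum>k\<in>K. (\<Sum>s<N. v $ s * w s k)\<^sup>2)"
      by (simp add: power2_eq_square sum_product)
    finally show ?thesis .
  qed
  then show ?thesis
    unfolding psd_def by (auto simp: mat_eq_iff mult.commute intro!: sum_nonneg)
qed

lemma entry_inner_abs_le:
  assumes "X \<in> carrier_mat N N" and "\<forall>s<N. \<forall>t<N. \<bar>X $$ (s,t)\<bar> \<le> 1"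
  shows "\<bar>entry_inner X Y\<bar> \<le> (\<Sum>s<N. \<Sum>t<N. \<bar>Y $$ (s,t)\<bar>)"
proof -
  have "\<bar>entry_inner X Y\<bar> \<le> (\<Sum>s<N. \<Sum>t<N. \<bar>X $$ (s,t) * Y $$ (s,t)\<bar>)"
    using assms(1) unfolding entry_inner_def by (auto intro!: order.trans[OF sum_abs] sum_mono sum_abs)
  also have "\<dots> \<le> (\<Sum>s<N. \<Sum>t<N. \<bar>Y $$ (s,t)\<bar>)"
    using assms(2) by (auto intro!: sum_mono simp: abs_mult mult_left_le_one_le)
  finally show ?thesis .
qed

lemma disc_le_pdisc:
  assumes X: "psd (2 * dim_row M) X" and diag: "\<forall>i < 2 * dim_row M. X $$ (i,i) \<le> 1"
  shows "disc M X \<le> pdisc M"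
proof -
  let ?N = "2 * dim_row M" and ?p = "real (ones M) / (real (dim_row M))\<^sup>2"
  let ?S = "{X. psd ?N X \<and> (\<forall>i < ?N. X $$ (i,i) \<le> 1)}"
  let ?B = "\<lambda>Y. \<Sum>s<?N. \<Sum>t<?N. \<bar>Y $$ (s,t)\<bar>"
  have "disc M Y \<le> ?B (symmetrization M) + \<bar>?p\<bar> * ?B (bip_mat (dim_row M))" if "Y \<in> ?S" for Y
  proof -
    have YC: "Y \<in> carrier_mat ?N ?N" using that unfolding psd_def by auto
    have "\<forall>s<?N. \<forall>t<?N. \<bar>Y $$ (s,t)\<bar> \<le> 1" using that psd_abs_entry_le_1 by blast
    note bound = entry_inner_abs_le[OF YC this]
    have "disc M Y \<le> \<bar>entry_inner Y (symmetrization M)\<bar> + \<bar>?p\<bar> * \<bar>entry_inner Y (bip_mat (dim_row M))\<bar>"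
      using abs_ge_self[of "entry_inner Y (symmetrization M)"]
        abs_ge_minus_self[of "?p * entry_inner Y (bip_mat (dim_row M))"]
      unfolding disc_def Let_def abs_mult by linarith
    also have "\<dots> \<le> ?B (symmetrization M) + \<bar>?p\<bar> * ?B (bip_mat (dim_row M))"
      using bound by (intro add_mono mult_left_mono) auto
    finally show ?thesis .
  qed
  then have "bdd_above (disc M ` ?S)" by (intro bdd_aboveI2)
  moreover have "X \<in> ?S" using X diag by auto
  ultimately show ?thesis unfolding pdisc_def by (intro cSup_upper) auto
qed

lemma disc_eq_sum:
  assumes M: "M \<in> carrier_mat n n" and X: "X \<in> carrier_mat (2 * n) (2 * n)"
  shows "disc M X = (\<Sum>i<n. \<Sum>j<n. (M $$ (i,j) - real (ones M) / (real n)\<^sup>2) * (X $$ (i, n + j) + X $$ (n + j, i)))"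
proof -
  define p where "p = real (ones M) / (real n)\<^sup>2"
  have "disc M X = (\<Sum>s<2 * n. \<Sum>t<2 * n. X $$ (s,t) * (symmetrization M $$ (s,t) - p * bip_mat n $$ (s,t)))"
    using M X unfolding disc_def entry_inner_def Let_def p_def
    by (simp add: sum_subtractf sum_distrib_left algebra_simps)
  also have "\<dots> = (\<Sum>i<n. \<Sum>j<n. X $$ (i, n + j) * (M $$ (i,j) - p)) + (\<Sum>i<n. \<Sum>j<n. X $$ (n + i, j) * (M $$ (j,i) - p))"
    using M by (simp add: mult_2 sum_lessThan_add symmetrization_def bip_mat_def sum.distrib)
  also have "(\<Sum>i<n. \<Sum>j<n. X $$ (n + i, j) * (M $$ (j,i) - p)) = (\<Sum>i<n. \<Sum>j<n. X $$ (n + j, i) * (M $$ (i,j) - p))"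
    by (rule sum.swap)
  finally show ?thesis unfolding p_def by (simp add: sum.distrib[symmetric] algebra_simps)
qed

lemma pdisc_ge_bilinear:
  fixes a b :: "nat \<Rightarrow> 'k \<Rightarrow> real"
  assumes M: "M \<in> carrier_mat n n" and K: "finite K"
    and a: "\<forall>i<n. (\<Sum>k\<in>K. (a i k)\<^sup>2) \<le> 1" and b: "\<forall>j<n. (\<Sum>k\<in>K. (b j k)\<^sup>2) \<le> 1"
  shows "2 * (\<Sum>i<n. \<Sum>j<n. (M $$ (i,j) - real (ones M) / (real n)\<^sup>2) * (\<Sum>k\<in>K. a i k * b j k)) \<le> pdisc M"
proof -
  define w where "w s k = (if s < n then a s k else b (s - n) k)" for s k
  define X where "X = mat (2 * n) (2 * n) (\<lambda>(s,t). \<Sum>k\<in>K. w s k * w t k)"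
  have "psd (2 * dim_row M) X" using gram_mat_psd[OF K] M unfolding X_def by simp
  moreover have "\<forall>i < 2 * dim_row M. X $$ (i,i) \<le> 1"
  proof (intro allI impI)
    fix i assume "i < 2 * dim_row M"
    then show "X $$ (i,i) \<le> 1"
      using a b M by (cases "i < n") (auto simp: X_def w_def power2_eq_square)
  qed
  ultimately have "disc M X \<le> pdisc M" by (rule disc_le_pdisc)
  define G where "G i j = (\<Sum>k\<in>K. a i k * b j k)" for i j
  have XC: "X \<in> carrier_mat (2 * n) (2 * n)" unfolding X_def by simp
  have "X $$ (i, n + j) + X $$ (n + j, i) = 2 * G i j" if "i < n" "j < n" for i j
    using that by (simp add: X_def w_def G_def mult.commute)
  then have "disc M X = 2 * (\<Sum>i<n. \<Sum>j<n. (M $$ (i,j) - real (ones M) / (real n)\<^sup>2) * G i j)"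
    by (simp add: disc_eq_sum[OF M XC] sum_distrib_left mult_ac)
  with \<open>disc M X \<le> pdisc M\<close> show ?thesis by (simp add: G_def)
qed

section \<open>Heavy rows and columns\<close>

definition row_sum :: "real mat \<Rightarrow> nat \<Rightarrow> real" where
  "row_sum M i = (\<Sum>j<dim_col M. M $$ (i,j))"

definition col_sum :: "real mat \<Rightarrow> nat \<Rightarrow> real" where
  "col_sum M j = (\<Sum>i<dim_row M. M $$ (i,j))"

lemma pdisc_ge_rectangle_excess:
  assumes M: "M \<in> carrier_mat n n" and I: "I \<subseteq> {..<n}" and J: "J \<subseteq> {..<n}"
  shows "2 * (\<Sum>i\<in>I. \<Sum>j\<in>J. M $$ (i,j) - real (ones M) / (real n)\<^sup>2) \<le> pdisc M"
proof -
  let ?p = "real (ones M) / (real n)\<^sup>2"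
  have "2 * (\<Sum>i<n. \<Sum>j<n. (M $$ (i,j) - ?p) * (\<Sum>k\<in>{()}. of_bool (i \<in> I) * of_bool (j \<in> J))) \<le> pdisc M"
    by (rule pdisc_ge_bilinear[OF M]) auto
  also have "(\<Sum>i<n. \<Sum>j<n. (M $$ (i,j) - ?p) * (\<Sum>k\<in>{()}. of_bool (i \<in> I) * of_bool (j \<in> J)))
      = (\<Sum>i<n. \<Sum>j<n. of_bool (i \<in> I) * of_bool (j \<in> J) * (M $$ (i,j) - ?p))"
    by (intro sum.cong refl) (simp add: mult_ac)
  also have "\<dots> = (\<Sum>i\<in>I. \<Sum>j\<in>J. M $$ (i,j) - ?p)"
    using I J by (simp add: sum_of_bool_rectangle)
  finally show ?thesis .
qed

lemma pdisc_nonneg: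
  assumes "M \<in> carrier_mat n n"
  shows "0 \<le> pdisc M"
  using pdisc_ge_rectangle_excess[OF assms, of "{}" "{}"] by simp

lemma pdisc_ge_heavy_rows:
  assumes M: "M \<in> carrier_mat n n" and I: "I \<subseteq> {..<n}"
    and heavy: "\<forall>i\<in>I. 2 * real (ones M) / real n \<le> row_sum M i"
  shows "sum (row_sum M) I \<le> pdisc M"
proof -
  have "(\<Sum>j<n. M $$ (i,j) - real (ones M) / (real n)\<^sup>2) = row_sum M i - real (ones M) / real n" for i
    using M by (cases "n = 0") (simp_all add: row_sum_def sum_subtractf power2_eq_square)
  then have "2 * (\<Sum>i\<in>I. row_sum M i - real (ones M) / real n) \<le> pdisc M"
    using pdisc_ge_rectangle_excess[OF M I order.refl] by simp
  moreover have "sum (row_sum M) I \<le> 2 * (\<Sum>i\<in>I. row_sum M i - real (ones M) / real n)"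
    using heavy by (simp add: sum_distrib_left sum_mono)
  ultimately show ?thesis by linarith
qed

lemma pdisc_ge_heavy_cols:
  assumes M: "M \<in> carrier_mat n n" and J: "J \<subseteq> {..<n}"
    and heavy: "\<forall>j\<in>J. 2 * real (ones M) / real n \<le> col_sum M j"
  shows "sum (col_sum M) J \<le> pdisc M"
proof -
  have "(\<Sum>i<n. M $$ (i,j) - real (ones M) / (real n)\<^sup>2) = col_sum M j - real (ones M) / real n" for j
    using M by (cases "n = 0") (simp_all add: col_sum_def sum_subtractf power2_eq_square)
  then have "2 * (\<Sum>j\<in>J. col_sum M j - real (ones M) / real n) \<le> pdisc M"
    using pdisc_ge_rectangle_excess[OF M order.refl J] by (subst (asm) sum.swap) simp
  moreover have "sum (col_sum M) J \<le> 2 * (\<Sum>j\<in>J. col_sum M j - real (ones M) / real n)"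
    using heavy by (simp add: sum_distrib_left sum_mono)
  ultimately show ?thesis by linarith
qed

lemma sum_ones_entries:
  fixes M :: "real mat"
  assumes bin: "\<forall>i<n. \<forall>j<n. M $$ (i,j) = 0 \<or> M $$ (i,j) = 1"
    and I: "I \<subseteq> {..<n}" and J: "J \<subseteq> {..<n}"
  shows "(\<Sum>x\<in>{(i,j) \<in> I \<times> J. M $$ (i,j) = 1}. \<phi> x) = (\<Sum>i\<in>I. \<Sum>j\<in>J. M $$ (i,j) * \<phi> (i,j))"
proof -
  have fin: "finite (I \<times> J)" using I J finite_subset by blast
  have "(\<Sum>x\<in>{(i,j) \<in> I \<times> J. M $$ (i,j) = 1}. \<phi> x) = (\<Sum>x\<in>I \<times> J. if M $$ x = 1 then \<phi> x else 0)"
    using fin by (subst sum.inter_filter [symmetric]) (auto intro!: sum.cong)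
  also have "\<dots> = (\<Sum>x\<in>I \<times> J. M $$ x * \<phi> x)"
  proof (intro sum.cong refl)
    fix x assume "x \<in> I \<times> J"
    then have "M $$ x = 0 \<or> M $$ x = 1" using bin I J by (cases x) auto
    then show "(if M $$ x = 1 then \<phi> x else 0) = M $$ x * \<phi> x" by auto
  qed
  finally show ?thesis by (simp add: sum.cartesian_product)
qed

lemma ones_eq_sum_entries:
  assumes M: "M \<in> carrier_mat n n" and bin: "\<forall>i<n. \<forall>j<n. M $$ (i,j) = 0 \<or> M $$ (i,j) = 1"
  shows "real (ones M) = (\<Sum>i<n. \<Sum>j<n. M $$ (i,j))"
proof -
  have "{(i,j). i < dim_row M \<and> j < dim_col M \<and> M $$ (i,j) = 1} = {(i,j) \<in> {..<n} \<times> {..<n}. M $$ (i,j) = 1}"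
    using M by auto
  then show ?thesis
    using sum_ones_entries[OF bin order.refl order.refl, of "\<lambda>_. 1"] unfolding ones_def by simp
qed

lemma ones_le_cover:
  assumes M: "M \<in> carrier_mat n n" and bin: "\<forall>i<n. \<forall>j<n. M $$ (i,j) = 0 \<or> M $$ (i,j) = 1"
    and I: "I \<subseteq> {..<n}" and J: "J \<subseteq> {..<n}"
  shows "real (ones M) \<le> sum (row_sum M) I + sum (col_sum M) J
           + card {(i,j) \<in> ({..<n} - I) \<times> ({..<n} - J). M $$ (i,j) = 1}"
proof -
  let ?I' = "{..<n} - I" and ?J' = "{..<n} - J"
  have nonneg: "0 \<le> M $$ (i,j)" if "i < n" "j < n" for i j using bin that by force
  have "real (ones M) = (\<Sum>i\<in>I. \<Sum>j<n. M $$ (i,j)) + (\<Sum>i\<in>?I'. \<Sum>j<n. M $$ (i,j))"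
    unfolding ones_eq_sum_entries[OF M bin]
    using sum.subset_diff[OF I, where g = "\<lambda>i. \<Sum>j<n. M $$ (i,j)"] by simp
  also have "(\<Sum>i\<in>?I'. \<Sum>j<n. M $$ (i,j)) = (\<Sum>i\<in>?I'. \<Sum>j\<in>?J'. M $$ (i,j)) + (\<Sum>i\<in>?I'. \<Sum>j\<in>J. M $$ (i,j))"
    by (simp add: sum.subset_diff[OF J] sum.distrib)
  also have "(\<Sum>i\<in>I. \<Sum>j<n. M $$ (i,j)) = sum (row_sum M) I"
    using M by (simp add: row_sum_def)
  also have "(\<Sum>i\<in>?I'. \<Sum>j\<in>J. M $$ (i,j)) \<le> sum (col_sum M) J"
  proof -
    have "(\<Sum>i\<in>?I'. \<Sum>j\<in>J. M $$ (i,j)) = (\<Sum>j\<in>J. \<Sum>i\<in>?I'. M $$ (i,j))" by (rule sum.swap)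
    also have "\<dots> \<le> (\<Sum>j\<in>J. \<Sum>i<n. M $$ (i,j))"
      using J nonneg by (intro sum_mono sum_mono2) auto
    finally show ?thesis using M by (simp add: col_sum_def)
  qed
  also have "(\<Sum>i\<in>?I'. \<Sum>j\<in>?J'. M $$ (i,j)) = card {(i,j) \<in> ?I' \<times> ?J'. M $$ (i,j) = 1}"
    using sum_ones_entries[OF bin Diff_subset Diff_subset, of "\<lambda>_. 1"] by simp
  finally show ?thesis by linarith
qed

section \<open>Orthonormal factorization\<close>

lemma (in vec_space) orthogonal_span_expansion:
  assumes U: "finite U" "U \<subseteq> carrier_vec n"
    and orth: "\<forall>u\<in>U. \<forall>w\<in>U. u \<noteq> w \<longrightarrow> u \<bullet> w = 0" and nz: "\<forall>u\<in>U. u \<bullet> u \<noteq> 0"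
    and v: "v \<in> span U" and i: "i < n"
  shows "v $ i = (\<Sum>u\<in>U. u $ i * (u \<bullet> v) / (u \<bullet> u))"
proof -
  obtain c A where vA: "v = lincomb c A" and A: "finite A" "A \<subseteq> U"
    using in_spanE[OF v] by blast
  have AC: "A \<subseteq> carrier_vec n" using A U by auto
  have vC: "v \<in> carrier_vec n" unfolding vA using AC by (intro lincomb_closed) auto
  have uv: "u \<bullet> v = (if u \<in> A then c u * (u \<bullet> u) else 0)" if u: "u \<in> U" for u
  proof -
    have uC: "u \<in> carrier_vec n" using u U by auto
    have "u \<bullet> v = (\<Sum>l<n. \<Sum>x\<in>A. c x * (u $ l * x $ l))"
      using uC vC lincomb_index[OF _ AC] unfolding vA
      by (simp add: scalar_prod_def lessThan_atLeast0 sum_distrib_left mult_ac)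
    also have "\<dots> = (\<Sum>x\<in>A. c x * (u \<bullet> x))"
      using AC by (subst sum.swap) (auto simp: scalar_prod_def lessThan_atLeast0 sum_distrib_left intro!: sum.cong)
    also have "\<dots> = (\<Sum>x\<in>A. if x = u then c u * (u \<bullet> u) else 0)"
      using orth u A by (intro sum.cong refl) auto
    finally show ?thesis using A by (simp add: sum.delta')
  qed
  have "(\<Sum>u\<in>U. u $ i * (u \<bullet> v) / (u \<bullet> u)) = (\<Sum>u\<in>U. if u \<in> A then c u * u $ i else 0)"
    using nz by (intro sum.cong refl) (auto simp: uv)
  also have "\<dots> = (\<Sum>u\<in>A. c u * u $ i)"
    using A U by (simp add: sum.If_cases Int_absorb1)
  also have "\<dots> = v $ i" unfolding vA using lincomb_index[OF i AC] by simp
  finally show ?thesis by simp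
qed

lemma (in vec_space) cols_subset_span_maximal_indpt:
  assumes M: "M \<in> carrier_mat n nc"
    and max: "maximal S (\<lambda>T. T \<subseteq> set (cols M) \<and> lin_indpt T)"
  shows "set (cols M) \<subseteq> span S"
proof
  fix c assume c: "c \<in> set (cols M)"
  have SC: "S \<subseteq> set (cols M)" and li: "lin_indpt S" using max unfolding maximal_def by auto
  have colsC: "set (cols M) \<subseteq> carrier_vec n" using M cols_dim by blast
  then have S_C: "S \<subseteq> carrier_vec n" using SC by auto
  show "c \<in> span S"
  proof (cases "c \<in> S")
    case True then show ?thesis using span_mem[OF S_C] by auto
  next
    case False
    have "lin_dep (S \<union> {c})"
    proof (rule ccontr)
      assume "\<not> lin_dep (S \<union> {c})"
      then have "S \<union> {c} = S" using max SC c unfolding maximal_def by blast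
      then show False using False by auto
    qed
    then show ?thesis using lin_dep_iff_in_span[OF S_C li _ False] c colsC by auto
  qed
qed

lemma corthogonal_real_orthogonal:
  fixes us :: "real vec list"
  assumes "corthogonal us"
  shows "\<forall>u\<in>set us. \<forall>w\<in>set us. u \<noteq> w \<longrightarrow> u \<bullet> w = 0" and "\<forall>u\<in>set us. 0 < u \<bullet> u"
proof -
  have real_cscalar: "x \<bullet>c y = x \<bullet> y" for x y :: "real vec"
    unfolding scalar_prod_def conjugate_vec_def by simp
  show "\<forall>u\<in>set us. \<forall>w\<in>set us. u \<noteq> w \<longrightarrow> u \<bullet> w = 0"
    using assms unfolding corthogonal_def real_cscalar by (metis in_set_conv_nth)
  show "\<forall>u\<in>set us. 0 < u \<bullet> u"
  proof
    fix u assume "u \<in> set us"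
    then have "u \<bullet> u \<noteq> 0"
      using assms unfolding corthogonal_def real_cscalar by (metis in_set_conv_nth)
    then show "0 < u \<bullet> u"
      using conjugate_square_ge_0_vec[of u] by (simp add: real_cscalar order_less_le)
  qed
qed

lemma orthogonal_basis_expansion:
  fixes M :: "real mat"
  assumes M: "M \<in> carrier_mat n nc"
  obtains U where "finite U" "U \<subseteq> carrier_vec n" "card U = vec_space.rank n M" "\<forall>u\<in>U. 0 < u \<bullet> u"
    "\<forall>i<n. \<forall>j<nc. M $$ (i,j) = (\<Sum>u\<in>U. u $ i * (u \<bullet> col M j) / (u \<bullet> u))"
proof -
  interpret vec_space "TYPE(real)" n .
  have colsC: "set (cols M) \<subseteq> carrier_vec n" using M cols_dim by blast
  obtain S where finS: "finite S" and max: "maximal S (\<lambda>T. T \<subseteq> set (cols M) \<and> lin_indpt T)"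
    using maximal_exists_superset[of "set (cols M)" "(\<lambda>T. T \<subseteq> set (cols M) \<and> lin_indpt T)" "{}"]
    by (metis (no_types, lifting) List.finite_set empty_subsetI subset_li_is_li fin_dim
        finite_basis_exists vec_vs vectorspace.basis_def)
  have SC: "S \<subseteq> carrier_vec n" and li: "lin_indpt S" using max colsC unfolding maximal_def by auto
  obtain ws where ws: "set ws = S" "distinct ws" using finite_distinct_list[OF finS] by blast
  define us where "us = gram_schmidt n ws"
  have gs: "span S = span (set us)" "corthogonal us" "set us \<subseteq> carrier_vec n"
    "length us = length ws" "distinct us"
    using cof_vec_space.gram_schmidt_result[of ws n us] ws SC li us_def by auto
  note orth = corthogonal_real_orthogonal[OF gs(2)]
  have expansion: "\<forall>i<n. \<forall>j<nc. M $$ (i,j) = (\<Sum>u\<in>set us. u $ i * (u \<bullet> col M j) / (u \<bullet> u))"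
  proof (intro allI impI)
    fix i j assume i: "i < n" and j: "j < nc"
    have "col M j \<in> span (set us)"
      using cols_subset_span_maximal_indpt[OF M max] gs(1) j M by (auto simp: cols_def)
    moreover have "\<forall>u\<in>set us. u \<bullet> u \<noteq> 0" using orth(2) by force
    ultimately have "col M j $ i = (\<Sum>u\<in>set us. u $ i * (u \<bullet> col M j) / (u \<bullet> u))"
      using orthogonal_span_expansion[OF _ gs(3) orth(1) _ _ i] by simp
    then show "M $$ (i,j) = (\<Sum>u\<in>set us. u $ i * (u \<bullet> col M j) / (u \<bullet> u))" using i j M by simp
  qed
  have "card (set us) = rank M"
    using rank_card_indpt[OF M max] gs(4,5) ws distinct_card by metis
  with gs(3) orth(2) expansion show thesis by (intro that) auto
qed

(* The columns of f are an orthonormal basis of the column space of M, and g j holds the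
   coordinates of column j in this basis. *)
lemma orthonormal_factorization:
  fixes M :: "real mat"
  assumes M: "M \<in> carrier_mat n nc"
  obtains K :: "real vec set" and f g where "finite K" "card K = vec_space.rank n M"
    "\<forall>k\<in>K. (\<Sum>i<n. (f i k)\<^sup>2) = 1"
    "\<forall>i<n. \<forall>j<nc. M $$ (i,j) = (\<Sum>k\<in>K. f i k * g j k)"
    "\<forall>j<nc. (\<Sum>k\<in>K. (g j k)\<^sup>2) = (\<Sum>i<n. (M $$ (i,j))\<^sup>2)"
proof -
  obtain U where U: "finite U" "U \<subseteq> carrier_vec n" "card U = vec_space.rank n M"
    and pos: "\<forall>u\<in>U. 0 < u \<bullet> u"
    and expansion: "\<forall>i<n. \<forall>j<nc. M $$ (i,j) = (\<Sum>u\<in>U. u $ i * (u \<bullet> col M j) / (u \<bullet> u))"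
    using orthogonal_basis_expansion[OF M] by blast
  define f where "f i u = u $ i / sqrt (u \<bullet> u)" for i u
  define g where "g j u = (u \<bullet> col M j) / sqrt (u \<bullet> u)" for j u
  have normal: "\<forall>u\<in>U. (\<Sum>i<n. (f i u)\<^sup>2) = 1"
  proof
    fix u assume u: "u \<in> U"
    have uu: "u \<bullet> u = (\<Sum>i<n. (u $ i)\<^sup>2)"
      using u U(2) unfolding scalar_prod_def by (auto simp: lessThan_atLeast0 power2_eq_square)
    have "0 < u \<bullet> u" using u pos by blast
    then have "0 < (\<Sum>i<n. (u $ i)\<^sup>2)" by (simp only: uu)
    then show "(\<Sum>i<n. (f i u)\<^sup>2) = 1"
      by (simp add: f_def uu power_divide sum_divide_distrib[symmetric])
  qed
  have "f i u * g j u = u $ i * (u \<bullet> col M j) / (u \<bullet> u)" if "u \<in> U" for i j u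
  proof -
    have "0 < u \<bullet> u" using pos that by blast
    then have "sqrt (u \<bullet> u) * sqrt (u \<bullet> u) = u \<bullet> u" by (metis abs_of_pos real_sqrt_mult_self)
    then show ?thesis by (simp add: f_def g_def)
  qed
  then have factor: "\<forall>i<n. \<forall>j<nc. M $$ (i,j) = (\<Sum>u\<in>U. f i u * g j u)"
    using expansion by simp
  have g_coeff: "\<forall>u\<in>U. g j u = (\<Sum>i<n. f i u * M $$ (i,j))" if j: "j < nc" for j
    using U(2) M j
    by (auto simp: f_def g_def scalar_prod_def lessThan_atLeast0 sum_divide_distrib)
  have "\<forall>j<nc. (\<Sum>k\<in>U. (g j k)\<^sup>2) = (\<Sum>i<n. (M $$ (i,j))\<^sup>2)"
  proof (intro allI impI)
    fix j assume "j < nc"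
    show "(\<Sum>k\<in>U. (g j k)\<^sup>2) = (\<Sum>i<n. (M $$ (i,j))\<^sup>2)"
    proof (rule sum_squares_eq_coeff_squares[symmetric])
      show "\<forall>i<n. M $$ (i,j) = (\<Sum>k\<in>U. f i k * g j k)" using factor \<open>j < nc\<close> by blast
      show "\<forall>k\<in>U. g j k = (\<Sum>i<n. f i k * M $$ (i,j))" using g_coeff \<open>j < nc\<close> by blast
    qed
  qed
  with U normal factor show thesis by (intro that) auto
qed

lemma pdisc_ge_factorization:
  fixes f g :: "nat \<Rightarrow> 'k \<Rightarrow> real"
  assumes M: "M \<in> carrier_mat n n" and bin: "\<forall>i<n. \<forall>j<n. M $$ (i,j) = 0 \<or> M $$ (i,j) = 1"
    and K: "finite K" and factor: "\<forall>i<n. \<forall>j<n. M $$ (i,j) = (\<Sum>k\<in>K. f i k * g j k)"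
    and sparse: "2 * ones M \<le> n\<^sup>2" and I: "I \<subseteq> {..<n}" and J: "J \<subseteq> {..<n}"
  shows "(\<Sum>(i,j)\<in>{(i,j) \<in> I \<times> J. M $$ (i,j) = 1}.
           1 / sqrt ((\<Sum>k\<in>K. (f i k)\<^sup>2) * (\<Sum>k\<in>K. (g j k)\<^sup>2))) \<le> pdisc M"
proof -
  define p where "p = real (ones M) / (real n)\<^sup>2"
  define \<alpha> where "\<alpha> i = (\<Sum>k\<in>K. (f i k)\<^sup>2)" for i
  define \<beta> where "\<beta> j = (\<Sum>k\<in>K. (g j k)\<^sup>2)" for j
  let ?h = "\<Sum>(i,j)\<in>{(i,j) \<in> I \<times> J. M $$ (i,j) = 1}. 1 / sqrt (\<alpha> i * \<beta> j)"
  define a where "a i k = of_bool (i \<in> I) * f i k / sqrt (\<alpha> i)" for i k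
  define b where "b j k = of_bool (j \<in> J) * g j k / sqrt (\<beta> j)" for j k
  have normalized: "(\<Sum>k\<in>K. (of_bool P * h k / sqrt (\<Sum>k\<in>K. (h k)\<^sup>2))\<^sup>2) \<le> 1" for P and h :: "'k \<Rightarrow> real"
    by (simp add: power_divide sum_divide_distrib[symmetric] sum_nonneg)
  have bilinear: "2 * (\<Sum>i<n. \<Sum>j<n. (M $$ (i,j) - p) * (\<Sum>k\<in>K. a i k * b j k)) \<le> pdisc M"
    unfolding p_def using normalized by (intro pdisc_ge_bilinear[OF M K]) (auto simp: a_def b_def \<alpha>_def \<beta>_def)
  define F where "F i j = M $$ (i,j) * ((1 - p) / sqrt (\<alpha> i * \<beta> j))" for i j
  have "(M $$ (i,j) - p) * (\<Sum>k\<in>K. a i k * b j k) = of_bool (i \<in> I) * of_bool (j \<in> J) * F i j"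
    if "i < n" "j < n" for i j
  proof -
    have "(\<Sum>k\<in>K. a i k * b j k) = of_bool (i \<in> I) * of_bool (j \<in> J) * M $$ (i,j) / sqrt (\<alpha> i * \<beta> j)"
      using factor that by (simp add: a_def b_def sum_divide_distrib[symmetric] sum_distrib_left
          real_sqrt_mult mult_ac)
    then show ?thesis using bin that by (auto simp: F_def)
  qed
  then have "(\<Sum>i<n. \<Sum>j<n. (M $$ (i,j) - p) * (\<Sum>k\<in>K. a i k * b j k)) = (\<Sum>i\<in>I. \<Sum>j\<in>J. F i j)"
    using I J by (simp add: sum_of_bool_rectangle)
  also have "\<dots> = (1 - p) * ?h"
    using sum_ones_entries[OF bin I J, of "\<lambda>(i,j). 1 / sqrt (\<alpha> i * \<beta> j)"]
    by (simp add: F_def sum_distrib_left mult_ac)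
  finally have bound: "2 * (1 - p) * ?h \<le> pdisc M" using bilinear by linarith
  have "2 * real (ones M) \<le> (real n)\<^sup>2"
    using of_nat_mono[OF sparse] by simp
  then have "1 \<le> 2 * (1 - p)"
    unfolding p_def by (cases "n = 0") (simp_all add: field_simps)
  moreover have "0 \<le> ?h"
    by (intro sum_nonneg) (auto simp: \<alpha>_def \<beta>_def sum_nonneg)
  ultimately have "1 * ?h \<le> 2 * (1 - p) * ?h" by (rule mult_right_mono)
  with bound show ?thesis unfolding \<alpha>_def \<beta>_def by linarith
qed

section \<open>Rows and columns of small sum\<close>

lemma pdisc_ge_leverage_sum:
  assumes M: "M \<in> carrier_mat n n" and bin: "\<forall>i<n. \<forall>j<n. M $$ (i,j) = 0 \<or> M $$ (i,j) = 1"
    and rank: "vec_space.rank n M \<le> r" and sparse: "2 * ones M \<le> n\<^sup>2"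
    and I: "I \<subseteq> {..<n}" and J: "J \<subseteq> {..<n}"
  obtains \<alpha> :: "nat \<Rightarrow> real" where "\<forall>i<n. 0 \<le> \<alpha> i" and "(\<Sum>i<n. \<alpha> i) \<le> r"
    and "\<forall>i<n. \<forall>j<n. M $$ (i,j) = 1 \<longrightarrow> 0 < \<alpha> i"
    and "(\<Sum>(i,j)\<in>{(i,j) \<in> I \<times> J. M $$ (i,j) = 1}. 1 / sqrt (\<alpha> i * col_sum M j)) \<le> pdisc M"
proof -
  obtain K :: "real vec set" and f g where K: "finite K" "card K = vec_space.rank n M"
    and normal: "\<forall>k\<in>K. (\<Sum>i<n. (f i k)\<^sup>2) = 1"
    and factor: "\<forall>i<n. \<forall>j<n. M $$ (i,j) = (\<Sum>k\<in>K. f i k * g j k)"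
    and parseval: "\<forall>j<n. (\<Sum>k\<in>K. (g j k)\<^sup>2) = (\<Sum>i<n. (M $$ (i,j))\<^sup>2)"
    using orthonormal_factorization[OF M] by blast
  define \<alpha> where "\<alpha> i = (\<Sum>k\<in>K. (f i k)\<^sup>2)" for i
  have "\<forall>i<n. 0 \<le> \<alpha> i" unfolding \<alpha>_def by (simp add: sum_nonneg)
  moreover have "(\<Sum>i<n. \<alpha> i) = real (card K)"
    unfolding \<alpha>_def using normal by (subst sum.swap) simp
  then have "(\<Sum>i<n. \<alpha> i) \<le> r" using rank K(2) by simp
  moreover have "\<forall>i<n. \<forall>j<n. M $$ (i,j) = 1 \<longrightarrow> 0 < \<alpha> i"
  proof (intro allI impI)
    fix i j assume "i < n" "j < n" "M $$ (i,j) = 1"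
    then have "(\<Sum>k\<in>K. f i k * g j k) \<noteq> 0" using factor by simp
    then show "0 < \<alpha> i" unfolding \<alpha>_def by (rule sum_squares_pos_if_sum_mult_nonzero[OF K(1)])
  qed
  moreover have "(\<Sum>k\<in>K. (g j k)\<^sup>2) = col_sum M j" if j: "j < n" for j
  proof -
    have "(M $$ (i,j))\<^sup>2 = M $$ (i,j)" if "i < n" for i
      using bin that j by (auto simp: power2_eq_square)
    then show ?thesis using parseval j M by (simp add: col_sum_def)
  qed
  then have "(\<Sum>(i,j)\<in>{(i,j) \<in> I \<times> J. M $$ (i,j) = 1}. 1 / sqrt ((\<Sum>k\<in>K. (f i k)\<^sup>2) * (\<Sum>k\<in>K. (g j k)\<^sup>2)))
      = (\<Sum>(i,j)\<in>{(i,j) \<in> I \<times> J. M $$ (i,j) = 1}. 1 / sqrt (\<alpha> i * col_sum M j))"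
    using J by (intro sum.cong refl) (auto simp: \<alpha>_def)
  then have "(\<Sum>(i,j)\<in>{(i,j) \<in> I \<times> J. M $$ (i,j) = 1}. 1 / sqrt (\<alpha> i * col_sum M j)) \<le> pdisc M"
    using pdisc_ge_factorization[OF M bin K(1) factor sparse I J] by simp
  ultimately show thesis by (rule that)
qed

lemma inverse_sqrt_ge_tangent:
  fixes x s :: real assumes x: "0 < x" and s: "0 < s"
  shows "(3 - x / s\<^sup>2) / (2 * s) \<le> 1 / sqrt x"
proof -
  define y where "y = sqrt x"
  have y: "0 < y" and xy: "x = y\<^sup>2" using x by (simp_all add: y_def)
  have "0 \<le> (y - s)\<^sup>2 * (y + 2 * s)" using y s by simp
  then have key: "y * (3 * s\<^sup>2 - y\<^sup>2) \<le> 2 * s ^ 3"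
    by (simp add: algebra_simps power2_eq_square power3_eq_cube)
  have "(3 - x / s\<^sup>2) / (2 * s) = y * (3 * s\<^sup>2 - y\<^sup>2) / (2 * s ^ 3 * y)"
    using s y unfolding xy by (simp add: field_simps power2_eq_square power3_eq_cube)
  also have "\<dots> \<le> 2 * s ^ 3 / (2 * s ^ 3 * y)"
    using key s y by (intro divide_right_mono) auto
  also have "\<dots> = 1 / sqrt x" using s y y_def by simp
  finally show ?thesis .
qed

lemma sum_inverse_sqrt_lower_bound:
  assumes E: "finite E" and x: "\<forall>e\<in>E. 0 < x e"
  shows "real (card E) * sqrt (card E) \<le> (\<Sum>e\<in>E. 1 / sqrt (x e)) * sqrt (\<Sum>e\<in>E. x e)"
proof (cases "E = {}")
  case False
  define k S where "k = real (card E)" and "S = (\<Sum>e\<in>E. x e)"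
  have k: "0 < k" using E False by (simp add: k_def card_gt_0_iff)
  have S: "0 < S" using E False x unfolding S_def by (intro sum_pos) auto
  \<comment> \<open>Use the tangent line at the mean of the \<open>x e\<close>.\<close>
  define s where "s = sqrt (S / k)"
  have s: "0 < s" using k S by (simp add: s_def)
  have s2: "s\<^sup>2 = S / k" using k S by (simp add: s_def)
  have "(\<Sum>e\<in>E. (3 - x e / s\<^sup>2) / (2 * s)) = (3 * k - S / s\<^sup>2) / (2 * s)"
    unfolding k_def S_def by (simp add: sum_divide_distrib[symmetric] sum_subtractf)
  also have "\<dots> = k / s" using k S s unfolding s2 by (simp add: field_simps)
  finally have "k / s = (\<Sum>e\<in>E. (3 - x e / s\<^sup>2) / (2 * s))" ..
  also have "\<dots> \<le> (\<Sum>e\<in>E. 1 / sqrt (x e))"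
    using x s by (intro sum_mono inverse_sqrt_ge_tangent) auto
  finally have "k / s * sqrt S \<le> (\<Sum>e\<in>E. 1 / sqrt (x e)) * sqrt S"
    by (rule mult_right_mono) (use S in simp)
  moreover have "k / s * sqrt S = k * sqrt k"
    using k S by (simp add: s_def real_sqrt_divide field_simps)
  ultimately show ?thesis unfolding k_def S_def by simp
qed simp

lemma sum_leverage_col_sum_le:
  fixes M :: "real mat" and \<alpha> :: "nat \<Rightarrow> real" and r :: real
  assumes M: "M \<in> carrier_mat n n" and bin: "\<forall>i<n. \<forall>j<n. M $$ (i,j) = 0 \<or> M $$ (i,j) = 1"
    and \<alpha>: "\<forall>i<n. 0 \<le> \<alpha> i" "(\<Sum>i<n. \<alpha> i) \<le> r"
    and I: "I \<subseteq> {..<n}" "\<forall>i\<in>I. row_sum M i \<le> D" and J: "J \<subseteq> {..<n}" "\<forall>j\<in>J. col_sum M j \<le> D"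
    and D: "0 \<le> D"
  shows "(\<Sum>(i,j)\<in>{(i,j) \<in> I \<times> J. M $$ (i,j) = 1}. \<alpha> i * col_sum M j) \<le> D\<^sup>2 * r"
proof -
  have nonneg: "0 \<le> M $$ (i,j)" if "i < n" "j < n" for i j using bin that by force
  have "(\<Sum>(i,j)\<in>{(i,j) \<in> I \<times> J. M $$ (i,j) = 1}. \<alpha> i * col_sum M j)
      = (\<Sum>i\<in>I. \<Sum>j\<in>J. M $$ (i,j) * (\<alpha> i * col_sum M j))"
    using sum_ones_entries[OF bin I(1) J(1), of "\<lambda>(i,j). \<alpha> i * col_sum M j"] by simp
  also have "\<dots> \<le> (\<Sum>i\<in>I. \<Sum>j\<in>J. M $$ (i,j) * (\<alpha> i * D))"
    using I J nonneg \<alpha>(1) by (intro sum_mono mult_left_mono) (auto simp: subset_eq)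
  also have "\<dots> = (\<Sum>i\<in>I. \<alpha> i * D * (\<Sum>j\<in>J. M $$ (i,j)))"
    by (simp add: sum_distrib_left mult_ac)
  also have "\<dots> \<le> (\<Sum>i\<in>I. \<alpha> i * D * row_sum M i)"
    using I J M nonneg \<alpha>(1) D
    by (intro sum_mono mult_left_mono) (auto simp: row_sum_def subset_eq intro!: sum_mono2)
  also have "\<dots> \<le> (\<Sum>i\<in>I. \<alpha> i * D * D)"
    using I \<alpha>(1) D by (intro sum_mono mult_left_mono) auto
  also have "\<dots> \<le> (\<Sum>i<n. \<alpha> i * D * D)"
    using I \<alpha>(1) D by (intro sum_mono2) auto
  also have "\<dots> = D\<^sup>2 * (\<Sum>i<n. \<alpha> i)"
    by (simp add: sum_distrib_left power2_eq_square mult_ac)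
  also have "\<dots> \<le> D\<^sup>2 * r"
    using \<alpha>(2) by (simp add: mult_left_mono)
  finally show ?thesis .
qed

lemma pdisc_ge_light_entries:
  assumes M: "M \<in> carrier_mat n n" and bin: "\<forall>i<n. \<forall>j<n. M $$ (i,j) = 0 \<or> M $$ (i,j) = 1"
    and rank: "vec_space.rank n M \<le> r" and sparse: "2 * ones M \<le> n\<^sup>2"
    and I: "I \<subseteq> {..<n}" "\<forall>i\<in>I. row_sum M i \<le> D" and J: "J \<subseteq> {..<n}" "\<forall>j\<in>J. col_sum M j \<le> D"
    and D: "0 \<le> D"
  defines "E \<equiv> {(i,j) \<in> I \<times> J. M $$ (i,j) = 1}"
  shows "real (card E) * sqrt (card E) \<le> D * sqrt r * pdisc M"
proof -
  obtain \<alpha> :: "nat \<Rightarrow> real" where \<alpha>: "\<forall>i<n. 0 \<le> \<alpha> i" "(\<Sum>i<n. \<alpha> i) \<le> r"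
    and \<alpha>_pos: "\<forall>i<n. \<forall>j<n. M $$ (i,j) = 1 \<longrightarrow> 0 < \<alpha> i"
    and h: "(\<Sum>(i,j)\<in>{(i,j) \<in> I \<times> J. M $$ (i,j) = 1}. 1 / sqrt (\<alpha> i * col_sum M j)) \<le> pdisc M"
    by (rule pdisc_ge_leverage_sum[OF M bin rank sparse I(1) J(1)])
  define x where "x = (\<lambda>(i,j). \<alpha> i * col_sum M j)"
  have fin: "finite E" unfolding E_def using I J by (auto intro: finite_subset[of _ "{..<n} \<times> {..<n}"])
  have pos: "\<forall>e\<in>E. 0 < x e"
  proof
    fix e assume "e \<in> E"
    then obtain i j where e: "e = (i,j)" "i \<in> I" "j \<in> J" "M $$ (i,j) = 1" unfolding E_def by auto
    then have ij: "i < n" "j < n" using I J by auto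
    have "\<forall>k<n. 0 \<le> M $$ (k,j)" using bin ij by force
    then have "M $$ (i,j) \<le> col_sum M j"
      using M ij unfolding col_sum_def by (intro member_le_sum) auto
    then show "0 < x e" using \<alpha>_pos e ij by (simp add: x_def)
  qed
  have "(\<Sum>e\<in>E. x e) \<le> D\<^sup>2 * real r"
    using sum_leverage_col_sum_le[OF M bin \<alpha> I J D] unfolding E_def x_def by simp
  then have "sqrt (\<Sum>e\<in>E. x e) \<le> sqrt (D\<^sup>2 * real r)" by (rule real_sqrt_le_mono)
  also have "\<dots> = D * sqrt r" using D by (simp add: real_sqrt_mult)
  finally have "sqrt (\<Sum>e\<in>E. x e) \<le> D * sqrt r" .
  moreover have "0 \<le> (\<Sum>e\<in>E. x e)" using pos by (intro sum_nonneg) (simp add: less_imp_le)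
  moreover have "0 \<le> (\<Sum>e\<in>E. 1 / sqrt (x e))" using pos by (intro sum_nonneg) (simp add: less_imp_le)
  moreover have "(\<Sum>e\<in>E. 1 / sqrt (x e)) \<le> pdisc M" using h unfolding E_def by (simp add: x_def split_def)
  ultimately have "(\<Sum>e\<in>E. 1 / sqrt (x e)) * sqrt (\<Sum>e\<in>E. x e) \<le> pdisc M * (D * sqrt r)"
    by (intro mult_mono) auto
  with sum_inverse_sqrt_lower_bound[OF fin pos] show ?thesis by (simp add: mult_ac)
qed

lemma pdisc_ge_light_majority:
  assumes M: "M \<in> carrier_mat n n" and bin: "\<forall>i<n. \<forall>j<n. M $$ (i,j) = 0 \<or> M $$ (i,j) = 1"
    and rank: "vec_space.rank n M \<le> r" and sparse: "2 * ones M \<le> n\<^sup>2"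
    and I: "I \<subseteq> {..<n}" "\<forall>i\<in>I. row_sum M i \<le> 2 * real (ones M) / n"
    and J: "J \<subseteq> {..<n}" "\<forall>j\<in>J. col_sum M j \<le> 2 * real (ones M) / n"
    and majority: "real (ones M) \<le> 2 * card {(i,j) \<in> I \<times> J. M $$ (i,j) = 1}"
  shows "sqrt (ones M) * n \<le> 4 * sqrt 2 * sqrt r * pdisc M"
proof -
  define m where "m = real (ones M)"
  define e where "e = real (card {(i,j) \<in> I \<times> J. M $$ (i,j) = 1})"
  have P: "0 \<le> pdisc M" by (rule pdisc_nonneg[OF M])
  have light: "e * sqrt e \<le> 2 * m / n * sqrt r * pdisc M"
    unfolding e_def m_def by (rule pdisc_ge_light_entries[OF M bin rank sparse I J]) simp
  show ?thesis
  proof (cases "m = 0")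
    case True
    then show ?thesis using P unfolding m_def by simp
  next
    case False
    then have m: "0 < m" unfolding m_def by simp
    then have n: "0 < n" using sparse unfolding m_def by (cases n) auto
    have "sqrt m \<le> sqrt 2 * sqrt e"
      using majority by (simp add: m_def e_def real_sqrt_mult[symmetric])
    then have "m * sqrt m \<le> (2 * e) * (sqrt 2 * sqrt e)"
      using majority m by (intro mult_mono) (auto simp: m_def e_def)
    also have "\<dots> = 2 * sqrt 2 * (e * sqrt e)" by simp
    also have "\<dots> \<le> 2 * sqrt 2 * (2 * m / n * sqrt r * pdisc M)"
      using light by (intro mult_left_mono) auto
    also have "\<dots> = m * (4 * sqrt 2 * sqrt r * pdisc M / n)"
      using n by (simp add: field_simps)
    finally have "sqrt m \<le> 4 * sqrt 2 * sqrt r * pdisc M / n"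
      using m by (rule mult_left_le_imp_le)
    then show ?thesis
      using n unfolding m_def by (simp add: le_divide_eq)
  qed
qed

lemma pdisc_lower_bound:
  assumes M: "M \<in> carrier_mat n n" and bin: "\<forall>i<n. \<forall>j<n. M $$ (i,j) = 0 \<or> M $$ (i,j) = 1"
    and rank: "vec_space.rank n M \<le> r" and r: "0 < r" and sparse: "2 * ones M \<le> n\<^sup>2"
  shows "min (real (ones M)) (sqrt (ones M) * n / sqrt r) \<le> 8 * pdisc M"
proof -
  define m where "m = real (ones M)"
  define HR where "HR = {i. i < n \<and> 2 * m / n \<le> row_sum M i}"
  define HC where "HC = {j. j < n \<and> 2 * m / n \<le> col_sum M j}"
  define E where "E = {(i,j) \<in> ({..<n} - HR) \<times> ({..<n} - HC). M $$ (i,j) = 1}"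
  have heavy_rows: "sum (row_sum M) HR \<le> pdisc M"
    by (intro pdisc_ge_heavy_rows[OF M]) (auto simp: HR_def m_def)
  have heavy_cols: "sum (col_sum M) HC \<le> pdisc M"
    by (intro pdisc_ge_heavy_cols[OF M]) (auto simp: HC_def m_def)
  have "HR \<subseteq> {..<n}" "HC \<subseteq> {..<n}" by (auto simp: HR_def HC_def)
  then have cover: "m \<le> sum (row_sum M) HR + sum (col_sum M) HC + card E"
    unfolding E_def m_def by (rule ones_le_cover[OF M bin])
  have P: "0 \<le> pdisc M" by (rule pdisc_nonneg[OF M])
  show ?thesis
  proof (cases "m \<le> 4 * pdisc M")
    case True
    then show ?thesis using P unfolding m_def by (simp add: min_le_iff_disj)
  next
    case False
    then have majority: "m \<le> 2 * card E" using cover heavy_rows heavy_cols by linarith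
    have "sqrt m * n \<le> 4 * sqrt 2 * sqrt r * pdisc M"
      unfolding m_def
      by (rule pdisc_ge_light_majority[OF M bin rank sparse, where I = "{..<n} - HR" and J = "{..<n} - HC"])
        (use majority in \<open>auto simp: HR_def HC_def m_def E_def\<close>)
    also have "\<dots> \<le> 8 * sqrt r * pdisc M"
      using P sqrt2_less_2 by (intro mult_right_mono) auto
    finally have "sqrt m * n / sqrt r \<le> 8 * pdisc M"
      using r by (simp add: pos_divide_le_eq mult_ac)
    then show ?thesis unfolding m_def by (simp add: min_le_iff_disj)
  qed
qed

theorem lemma3p4:
  "\<exists>c::real. c > 0 \<and>
     (\<forall>(n::nat) (r::nat) (M::real mat).
        r > 0 \<longrightarrow> n > 0 \<longrightarrow> M \<in> carrier_mat n n \<longrightarrow>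
        (\<forall>i<n. \<forall>j<n. M $$ (i,j) = 0 \<or> M $$ (i,j) = 1) \<longrightarrow>
        vec_space.rank n M \<le> r \<longrightarrow>
        real (ones M) / real n \<le> real n / 2 \<longrightarrow>
        pdisc M \<ge> c * min ((real (ones M) / real n) * real n)
                          (sqrt (real (ones M) / real n) * real n powr (3/2) / sqrt (real r)))"
proof (intro exI[of _ "1/8"] conjI allI impI)
  fix n r :: nat and M :: "real mat"
  assume r: "r > 0" and n: "n > 0" and M: "M \<in> carrier_mat n n"
    and bin: "\<forall>i<n. \<forall>j<n. M $$ (i,j) = 0 \<or> M $$ (i,j) = 1"
    and rank: "vec_space.rank n M \<le> r" and sparse: "real (ones M) / real n \<le> real n / 2"
  have "real (2 * ones M) \<le> real (n\<^sup>2)"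
    using sparse n by (simp add: field_simps power2_eq_square)
  then have "2 * ones M \<le> n\<^sup>2" by (simp only: of_nat_le_iff)
  note bound = pdisc_lower_bound[OF M bin rank r this]
  have "real n powr (3/2) = real n * sqrt n"
    by (simp add: powr_half_sqrt[symmetric] powr_mult_base)
  then have "sqrt (real (ones M) / real n) * real n powr (3/2) / sqrt (real r) = sqrt (ones M) * n / sqrt r"
    using n by (simp add: real_sqrt_divide)
  moreover have "real (ones M) / real n * real n = real (ones M)" using n by simp
  ultimately show "1/8 * min ((real (ones M) / real n) * real n)
      (sqrt (real (ones M) / real n) * real n powr (3/2) / sqrt (real r)) \<le> pdisc M"
    using bound by (simp only:)
qed simp

end
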